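(* Let $\rho_-,\rho_+\in(0,1)$ and let $D,E$ be matrices and $|V\rangle,\langle W|$ vectors such that $\langle W|V\rangle=1$, $DE=D+E$, $(1-\rho_+)D|V\rangle=|V\rangle$ and $\langle W|\rho_-E=\langle W|$. For $N\ge1$ and $\eta\in\Sigma_N=\{0,1\}^{\{1,\dots,N\}}$ set $\omega_N(\eta)=\langle W|\prod_{x=1}^N\{\eta(x)D+[1-\eta(x)]E\}|V\rangle$ (product ordered from $x=1$ to $x=N$). Then for any $N\ge2$ and any $\eta\in\Sigma_N$ for which there is a site $x\in\{1,\dots,N-1\}$ with $\eta_x=1$ and $\eta_{x+1}=0$, the quantity $$s_N(x,\eta)=\omega_N(\eta)-\omega_N(\sigma^{x,x+1}\eta)$$ has the same sign as $\rho_--\rho_+$.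
   Context: $\sigma^{x,x+1}\eta$ denotes the configuration obtained from $\eta$ by exchanging the occupation variables $\eta_x$ and $\eta_{x+1}$. (Such matrices and vectors give the matrix-product representation $\mu_{ss,N}(\eta)=\omega_N(\eta)/\langle W|(D+E)^N|V\rangle$ of the stationary measure of the boundary driven TASEP on $\{1,\dots,N\}$ with rightward jumps.) *)

theory Defs
  imports Complex_Main
begin

text \<open>Matrices are rendered as linear operators D, E on a real vector space 'v,
 the ket |V> as a vector V, the bra <W| as a linear functional W.\<close>

definition site_op :: "('v::real_vector \<Rightarrow> 'v) \<Rightarrow> ('v \<Rightarrow> 'v) \<Rightarrow> real \<Rightarrow> 'v \<Rightarrow> 'v" where
  "site_op D E e u = e *\<^sub>R D u + (1 - e) *\<^sub>R E u"

definition omega :: "('v::real_vector \<Rightarrow> real) \<Rightarrow> ('v \<Rightarrow> 'v) \<Rightarrow> ('v \<Rightarrow> 'v) \<Rightarrow> 'v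
    \<Rightarrow> nat \<Rightarrow> (nat \<Rightarrow> real) \<Rightarrow> real" where
  "omega W D E V N \<eta> = W (foldr (\<lambda>x u. site_op D E (\<eta> x) u) [1..<N+1] V)"

definition swap_sites :: "nat \<Rightarrow> (nat \<Rightarrow> real) \<Rightarrow> (nat \<Rightarrow> real)" where
  "swap_sites x \<eta> = \<eta>(x := \<eta> (x+1), x+1 := \<eta> x)"

end

theory Submission
  imports Defs
begin

text \<open>Write \<open>D = 1 + d\<close> and \<open>E = 1 + e\<close>. The relation \<open>DE = D + E\<close> says exactly \<open>d e = 1\<close>, so the
commutator \<open>[D,E] = 1 - e d\<close> is annihilated by \<open>d\<close> on the left and by \<open>e\<close> on the right.
Exchanging an occupied site with the empty site to its right changes \<open>\<omega>\<^sub>N\<close> by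
\<open>\<langle>W| L [D,E] R |V\<rangle>\<close>, with \<open>L\<close>, \<open>R\<close> words in \<open>D\<close> and \<open>E\<close>. Moving \<open>R\<close> to the right past \<open>d\<^sup>k\<close> only
produces sums of terms \<open>d\<^sup>k\<close> and \<open>d\<^sup>k\<^sup>+\<^sup>1\<close>, and \<open>[D,E] E = [D,E]\<close> absorbs the case \<open>k = 0\<close>; since
\<open>d |V\<rangle> = b |V\<rangle>\<close>, the value is a positive multiple of \<open>\<langle>W|[D,E]|V\<rangle> = 1 - a b\<close>, where
\<open>\<langle>W| e = a \<langle>W|\<close>. Moving \<open>L\<close> to the left past \<open>e\<^sup>k\<close> works symmetrically. Finally \<open>1 - a b\<close> has the
sign of \<open>\<rho>\<^sub>- - \<rho>\<^sub>+\<close>.\<close>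

lemma sgn_add_eq:
  fixes x y :: real
  assumes "sgn x = s" "sgn y = s"
  shows "sgn (x + y) = s"
  using assms by (auto simp: sgn_if split: if_splits)

lemma linear_funpow:
  fixes f :: "'a::real_vector \<Rightarrow> 'a"
  assumes "linear f"
  shows "linear (f ^^ k)"
  by (induction k) (simp_all add: linear_ident linear_compose[OF _ assms, unfolded o_def])

lemma site_op_0 [simp]: "site_op D E 0 u = E u"
  and site_op_1 [simp]: "site_op D E 1 u = D u"
  by (simp_all add: site_op_def)

lemma linear_site_op: "linear D \<Longrightarrow> linear E \<Longrightarrow> linear (site_op D E c)"
  unfolding site_op_def[abs_def]
  by (intro linear_compose_add linear_compose_scale_right)

definition site_prod :: "('v::real_vector \<Rightarrow> 'v) \<Rightarrow> ('v \<Rightarrow> 'v) \<Rightarrow> (nat \<Rightarrow> real) \<Rightarrow> nat list \<Rightarrow> 'v \<Rightarrow> 'v"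
  where "site_prod D E \<eta> xs = foldr (\<lambda>x. site_op D E (\<eta> x)) xs"

lemma omega_eq_site_prod: "omega W D E V N \<eta> = W (site_prod D E \<eta> [1..<N+1] V)"
  by (simp add: omega_def site_prod_def)

lemma site_prod_Nil [simp]: "site_prod D E \<eta> [] u = u"
  and site_prod_Cons [simp]: "site_prod D E \<eta> (y # ys) u = site_op D E (\<eta> y) (site_prod D E \<eta> ys u)"
  and site_prod_append: "site_prod D E \<eta> (xs @ ys) u = site_prod D E \<eta> xs (site_prod D E \<eta> ys u)"
  by (simp_all add: site_prod_def)

lemma site_prod_cong: "(\<And>y. y \<in> set xs \<Longrightarrow> \<eta> y = \<eta>' y) \<Longrightarrow> site_prod D E \<eta> xs = site_prod D E \<eta>' xs"
  unfolding site_prod_def by (rule ext, rule foldr_cong) auto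

lemma linear_site_prod: "linear D \<Longrightarrow> linear E \<Longrightarrow> linear (site_prod D E \<eta> xs)"
  by (induction xs)
    (simp_all add: site_prod_def linear_id linear_compose[OF _ linear_site_op] flip: id_def)

lemma upt_split_at_pair:
  assumes "1 \<le> x" "x < N"
  shows "[1..<N+1] = [1..<x] @ x # Suc x # [x+2..<N+1]"
proof -
  have "[1..<N+1] = [1..<x] @ [x..<N+1]"
    using assms upt_add_eq_append[of 1 x "N+1-x"] by simp
  also have "[x..<N+1] = x # Suc x # [x+2..<N+1]"
    using assms by (simp add: upt_conv_Cons)
  finally show ?thesis .
qed

locale matrix_ansatz =
  fixes D E :: "'v::real_vector \<Rightarrow> 'v" and V :: 'v and W :: "'v \<Rightarrow> real" and a b :: real
  assumes linear_D: "linear D" and linear_E: "linear E" and linear_W: "linear W"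
    and W_V: "W V = 1"
    and DE_eq: "\<And>u. D (E u) = D u + E u"
    and D_V: "D V = (1 + b) *\<^sub>R V"
    and W_E: "\<And>u. W (E u) = (1 + a) * W u"
    and a_pos: "0 < a" and b_pos: "0 < b"
begin

definition d where "d u = D u - u"
definition e where "e u = E u - u"
definition DE_comm where "DE_comm u = D (E u) - E (D u)"

lemma D_eq: "D u = u + d u" and E_eq: "E u = u + e u"
  by (simp_all add: d_def e_def)

lemma linear_d: "linear d" and linear_e: "linear e"
  unfolding d_def[abs_def] e_def[abs_def]
  by (simp_all add: linear_compose_sub linear_D linear_E linear_ident)

lemma linear_d_pow: "linear (d ^^ k)"
  by (simp add: linear_funpow linear_d)

lemma d_e: "d (e u) = u"
  using DE_eq[of u] by (simp add: d_def e_def linear_diff[OF linear_D])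

lemma DE_comm_eq: "DE_comm u = u - e (d u)"
  using DE_eq[of u]
  by (simp add: DE_comm_def d_def e_def linear_diff[OF linear_D] linear_diff[OF linear_E] algebra_simps)

lemma linear_DE_comm: "linear DE_comm"
  unfolding DE_comm_eq[abs_def]
  by (intro linear_compose_sub linear_ident linear_compose[OF linear_d linear_e, unfolded o_def])

lemma d_DE_comm: "d (DE_comm u) = 0"
  by (simp add: DE_comm_eq linear_diff[OF linear_d] d_e)

lemma DE_comm_e: "DE_comm (e u) = 0"
  by (simp add: DE_comm_eq d_e)

lemma d_V: "d V = b *\<^sub>R V"
  using D_V by (simp add: d_def algebra_simps)

lemma d_pow_V: "(d ^^ k) V = b ^ k *\<^sub>R V"
  by (induction k) (simp_all add: d_V linear_scale[OF linear_d])

lemma W_e_pow: "W ((e ^^ k) u) = a ^ k * W u"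
  using W_E by (induction k arbitrary: u)
    (simp_all add: e_def linear_diff[OF linear_W] funpow_Suc_right algebra_simps del: funpow.simps(2))

lemma d_pow_D: "(d ^^ k) (D u) = (d ^^ k) u + (d ^^ Suc k) u"
  by (simp add: D_eq linear_add[OF linear_d_pow] funpow_Suc_right del: funpow.simps(2))

lemma d_pow_Suc_E: "(d ^^ Suc k) (E u) = (d ^^ k) u + (d ^^ Suc k) u"
  by (simp add: E_eq linear_add[OF linear_d_pow] linear_add[OF linear_d] d_e funpow_Suc_right
      del: funpow.simps(2))

lemma DE_comm_E: "DE_comm (E u) = DE_comm u"
  by (simp add: E_eq linear_add[OF linear_DE_comm] DE_comm_e)

lemma E_e_pow: "E ((e ^^ k) u) = (e ^^ k) u + (e ^^ Suc k) u"
  by (simp add: E_eq)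

lemma D_e_pow_Suc: "D ((e ^^ Suc k) u) = (e ^^ k) u + (e ^^ Suc k) u"
  by (simp add: D_eq d_e)

lemma D_DE_comm: "D (DE_comm u) = DE_comm u"
  by (simp add: D_eq d_DE_comm)

lemma W_DE_comm_V: "W (DE_comm V) = 1 - a * b"
  by (simp add: DE_comm_eq d_def D_V W_V linear_diff[OF linear_W] W_e_pow[of 1, simplified]
      linear_scale[OF linear_e] linear_scale[OF linear_W] algebra_simps)

lemma sgn_W_DE_comm_d_pow_site_prod:
  assumes "\<forall>y\<in>set ys. \<eta> y \<in> {0, 1}"
  shows "sgn (W (DE_comm ((d ^^ k) (site_prod D E \<eta> ys V)))) = sgn (1 - a * b)"
  using assms
proof (induction ys arbitrary: k)
  case Nil
  show ?case
    using b_pos by (simp add: d_pow_V linear_scale[OF linear_DE_comm] linear_scale[OF linear_W]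
        W_DE_comm_V sgn_mult)
next
  case (Cons y ys)
  let ?F = "\<lambda>k. W (DE_comm ((d ^^ k) (site_prod D E \<eta> ys V)))"
  have IH: "sgn (?F k) = sgn (1 - a * b)" for k
    using Cons by simp
  have W_DE_comm_add: "W (DE_comm (u + v)) = W (DE_comm u) + W (DE_comm v)" for u v
    by (simp add: linear_add[OF linear_DE_comm] linear_add[OF linear_W])
  from Cons.prems consider "\<eta> y = 1" | "\<eta> y = 0" "k = 0" | j where "\<eta> y = 0" "k = Suc j"
    by (cases k) auto
  then show ?case
  proof cases
    case 1
    then show ?thesis by (simp add: d_pow_D W_DE_comm_add sgn_add_eq IH del: funpow.simps(2))
  next
    case 2
    then show ?thesis using IH[of 0] by (simp add: DE_comm_E)
  next
    case 3
    then show ?thesis by (simp add: d_pow_Suc_E W_DE_comm_add sgn_add_eq IH del: funpow.simps(2))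
  qed
qed

lemma sgn_W_site_prod_e_pow_DE_comm:
  assumes "\<forall>y\<in>set xs. \<eta> y \<in> {0, 1}"
  shows "sgn (W (site_prod D E \<eta> xs ((e ^^ k) (DE_comm w)))) = sgn (W (DE_comm w))"
  using assms
proof (induction xs arbitrary: k rule: rev_induct)
  case Nil
  show ?case using a_pos by (simp add: W_e_pow sgn_mult)
next
  case (snoc y xs)
  let ?G = "\<lambda>k. W (site_prod D E \<eta> xs ((e ^^ k) (DE_comm w)))"
  have IH: "sgn (?G k) = sgn (W (DE_comm w))" for k
    using snoc by simp
  have W_site_prod_add: "W (site_prod D E \<eta> xs (u + v)) = W (site_prod D E \<eta> xs u) + W (site_prod D E \<eta> xs v)"
    for u v
    by (simp add: linear_add[OF linear_site_prod[OF linear_D linear_E]] linear_add[OF linear_W])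
  from snoc.prems consider "\<eta> y = 0" | "\<eta> y = 1" "k = 0" | j where "\<eta> y = 1" "k = Suc j"
    by (cases k) auto
  then show ?case
  proof cases
    case 1
    then show ?thesis
      by (simp add: site_prod_append E_e_pow W_site_prod_add sgn_add_eq IH del: funpow.simps(2))
  next
    case 2
    then show ?thesis using IH[of 0] by (simp add: site_prod_append D_DE_comm)
  next
    case 3
    then show ?thesis
      by (simp add: site_prod_append D_e_pow_Suc W_site_prod_add sgn_add_eq IH del: funpow.simps(2))
  qed
qed

lemma omega_minus_omega_swap_sites:
  assumes "1 \<le> x" "x < N" "\<eta> x = 1" "\<eta> (x+1) = 0"
  shows "omega W D E V N \<eta> - omega W D E V N (swap_sites x \<eta>) =
    W (site_prod D E \<eta> [1..<x] (DE_comm (site_prod D E \<eta> [x+2..<N+1] V)))"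
proof -
  let ?\<sigma> = "swap_sites x \<eta>"
  have "site_prod D E ?\<sigma> [1..<x] = site_prod D E \<eta> [1..<x]"
    and "site_prod D E ?\<sigma> [x+2..<N+1] = site_prod D E \<eta> [x+2..<N+1]"
    by (auto intro!: site_prod_cong simp: swap_sites_def)
  moreover have "?\<sigma> x = 0" "?\<sigma> (Suc x) = 1"
    using assms(3,4) by (simp_all add: swap_sites_def)
  ultimately show ?thesis
    unfolding omega_eq_site_prod upt_split_at_pair[OF assms(1,2)]
    using assms(3,4)
    by (simp add: site_prod_append DE_comm_def
        linear_diff[OF linear_site_prod[OF linear_D linear_E]] linear_diff[OF linear_W])
qed

theorem sgn_omega_minus_omega_swap_sites:
  assumes "\<forall>y\<in>{1..N}. \<eta> y \<in> {0, 1}" "1 \<le> x" "x < N" "\<eta> x = 1" "\<eta> (x+1) = 0"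
  shows "sgn (omega W D E V N \<eta> - omega W D E V N (swap_sites x \<eta>)) = sgn (1 - a * b)"
proof -
  have "set [1..<x] \<subseteq> {1..N}" "set [x+2..<N+1] \<subseteq> {1..N}"
    unfolding set_upt using assms(3) by (auto simp del: One_nat_def)
  with assms(1) have "\<forall>y\<in>set [1..<x]. \<eta> y \<in> {0, 1}" "\<forall>y\<in>set [x+2..<N+1]. \<eta> y \<in> {0, 1}"
    by blast+
  from sgn_W_site_prod_e_pow_DE_comm[OF this(1), of 0] sgn_W_DE_comm_d_pow_site_prod[OF this(2), of 0]
  show ?thesis
    by (simp add: omega_minus_omega_swap_sites[OF assms(2-5)])
qed

end

theorem lemma5p1:
  fixes D E :: "'v::real_vector \<Rightarrow> 'v" and V :: 'v and W :: "'v \<Rightarrow> real"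
    and rho_minus rho_plus :: real and N x :: nat and \<eta> :: "nat \<Rightarrow> real"
  assumes "0 < rho_minus" "rho_minus < 1" "0 < rho_plus" "rho_plus < 1"
    and "linear D" "linear E" "linear W"
    and "W V = 1"
    and "\<And>u. D (E u) = D u + E u"
    and "(1 - rho_plus) *\<^sub>R D V = V"
    and "\<And>u. rho_minus * W (E u) = W u"
    and "N \<ge> 2"
    and "\<forall>y\<in>{1..N}. \<eta> y \<in> {0, 1}"
    and "1 \<le> x" "x \<le> N - 1" "\<eta> x = 1" "\<eta> (x+1) = 0"
  shows "sgn (omega W D E V N \<eta> - omega W D E V N (swap_sites x \<eta>)) = sgn (rho_minus - rho_plus)"
proof -
  define a where "a = (1 - rho_minus) / rho_minus"
  define b where "b = rho_plus / (1 - rho_plus)"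
  interpret matrix_ansatz D E V W a b
  proof (rule matrix_ansatz.intro)
    have "D V = (1 / (1 - rho_plus)) *\<^sub>R ((1 - rho_plus) *\<^sub>R D V)"
      using assms(4) by simp
    then show "D V = (1 + b) *\<^sub>R V"
      using assms(4,10) by (simp add: b_def field_simps)
    show "W (E u) = (1 + a) * W u" for u
      using assms(1) assms(11)[of u] by (simp add: a_def field_simps)
  qed (use assms in \<open>simp_all add: a_def b_def\<close>)
  have "1 - a * b = (rho_minus - rho_plus) / (rho_minus * (1 - rho_plus))"
    using assms(1,4) by (simp add: a_def b_def field_simps)
  then have "sgn (1 - a * b) = sgn (rho_minus - rho_plus)"
    using assms(1,4) by (simp add: sgn_mult sgn_divide)
  with assms(12-17) show ?thesis
    using sgn_omega_minus_omega_swap_sites by simp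
qed

end
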